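(* Let $\mathcal{I}\in\mathrm{Ins}(\Omega,\mathcal{H})$ and $\mathcal{J}\in\mathrm{Ins}(\Lambda,\mathcal{H},\mathcal{V})$ be instruments. Then: if $\mathcal{I}$ does not disturb $\mathcal{J}$, then $\mathsf{A}^{\mathcal{I}}$ does not disturb $\mathcal{J}$; if $\mathsf{A}^{\mathcal{I}}$ does not disturb $\mathcal{J}$, then $\mathsf{A}^{\mathcal{I}}$ and $\mathcal{J}$ are compatible; and if $\mathsf{A}^{\mathcal{I}}$ and $\mathcal{J}$ are compatible, then $\mathsf{A}^{\mathcal{I}}$ is compatible with $\Phi^{\mathcal{J}}$ and $\mathsf{A}^{\mathcal{I}}$ is compatible with $\mathsf{A}^{\mathcal{J}}$.
   Context: All Hilbert spaces are finite-dimensional and complex, and all outcome sets are finite. A POVM $\mathsf{A}\in\mathcal{O}(\Omega,\mathcal{H})$ is a map $x\mapsto \mathsf{A}(x)$ from $\Omega$ to positive operators on $\mathcal{H}$ with $\sum_x \mathsf{A}(x)=I$. An instrument $\mathcal{I}\in\mathrm{Ins}(\Omega,\mathcal{H},\mathcal{K})$ is a family $(\mathcal{I}_x)_{x\in\Omega}$ of completely positive trace-nonincreasing linear maps $\mathcal{L}(\mathcal{H})\to\mathcal{L}(\mathcal{K})$ such that $\Phi^{\mathcal{I}}:=\sum_x\mathcal{I}_x$ is trace preserving (the induced channel); its induced POVM $\mathsf{A}^{\mathcal{I}}$ is defined by $\mathrm{tr}[\mathsf{A}^{\mathcal{I}}(x)\varrho]=\mathrm{tr}[\mathcal{I}_x(\varrho)]$;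 $\mathrm{Ins}(\Omega,\mathcal{H}):=\mathrm{Ins}(\Omega,\mathcal{H},\mathcal{H})$. An instrument $\mathcal{I}\in\mathrm{Ins}(\Omega,\mathcal{H})$ does not disturb $\mathcal{J}\in\mathrm{Ins}(\Lambda,\mathcal{H},\mathcal{V})$ if $\mathcal{J}_y\circ\Phi^{\mathcal{I}}=\mathcal{J}_y$ for all $y$. A POVM $\mathsf{A}\in\mathcal{O}(\Omega,\mathcal{H})$ does not disturb $\mathcal{J}$ if some $\mathcal{I}'\in\mathrm{Ins}(\Omega,\mathcal{H})$ with $\mathsf{A}^{\mathcal{I}'}=\mathsf{A}$ does not disturb $\mathcal{J}$. Two instruments $\mathcal{I}\in\mathrm{Ins}(\Omega,\mathcal{H},\mathcal{K})$, $\mathcal{J}\in\mathrm{Ins}(\Lambda,\mathcal{H},\mathcal{V})$ are compatible if there is $\mathcal{G}\in\mathrm{Ins}(\Omega\times\Lambda,\mathcal{H},\mathcal{K}\otimes\mathcal{V})$ with $\sum_{x}\mathrm{tr}_{\mathcal{K}}[\mathcal{G}_{(x,y)}(\varrho)]=\mathcal{J}_y(\varrho)$ for all $y$ and $\sum_y\mathrm{tr}_{\mathcal{V}}[\mathcal{G}_{(x,y)}(\varrho)]=\mathcal{I}_x(\varrho)$ for all $x$, for all states $\varrho$. A POVM $\mathsf{A}\in\mathcal{O}(\Omega,\mathcal{H})$ is identified with the instrument in $\mathrm{Ins}(\Omega,\mathcal{H},\mathbb{C})$ given by $\varrho\mapsto\mathrm{tr}[\mathsf{A}(x)\varrho]$,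 and a channel with a one-outcome instrument; compatibility involving POVMs or channels is defined through these identifications. *)

theory Defs
  imports "HOL-Analysis.Analysis"
begin

text \<open>Finite-dimensional Hilbert spaces are modelled as complex^'h for a finite index
type 'h; operators on them as complex^'h^'h (row index first).  The tensor product
K (x) V has index type 'k \<times> 'v; the one-dimensional space C has index type 1.
Finite outcome sets are finite types.\<close>

type_synonym 'h op = "complex^'h^'h"

definition trace :: "'h::finite op \<Rightarrow> complex" where
  "trace M = (\<Sum>i\<in>UNIV. M $ i $ i)"

definition op_smult :: "complex \<Rightarrow> 'h::finite op \<Rightarrow> 'h op" where
  "op_smult c M = (\<chi> i j. c * M $ i $ j)"

definition psd :: "'h::finite op \<Rightarrow> bool" where
  "psd M \<longleftrightarrow> (\<forall>v::complex^'h.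
     Im (\<Sum>i\<in>UNIV. \<Sum>j\<in>UNIV. cnj (v $ i) * M $ i $ j * v $ j) = 0 \<and>
     Re (\<Sum>i\<in>UNIV. \<Sum>j\<in>UNIV. cnj (v $ i) * M $ i $ j * v $ j) \<ge> 0)"

text \<open>Positivity of an operator given as a function on an index set (used for ancilla spaces
of arbitrary finite dimension n, indexed by {..<n}).\<close>
definition psd_on :: "'a set \<Rightarrow> ('a \<Rightarrow> 'a \<Rightarrow> complex) \<Rightarrow> bool" where
  "psd_on I M \<longleftrightarrow> (\<forall>v::'a \<Rightarrow> complex.
     Im (\<Sum>p\<in>I. \<Sum>q\<in>I. cnj (v p) * M p q * v q) = 0 \<and>
     Re (\<Sum>p\<in>I. \<Sum>q\<in>I. cnj (v p) * M p q * v q) \<ge> 0)"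

definition is_state :: "'h::finite op \<Rightarrow> bool" where
  "is_state \<rho> \<longleftrightarrow> psd \<rho> \<and> trace \<rho> = 1"

definition linear_op_map :: "('h::finite op \<Rightarrow> 'k::finite op) \<Rightarrow> bool" where
  "linear_op_map \<Phi> \<longleftrightarrow> (\<forall>A B. \<Phi> (A + B) = \<Phi> A + \<Phi> B) \<and>
                         (\<forall>c A. \<Phi> (op_smult c A) = op_smult c (\<Phi> A))"

text \<open>id_n (x) \<Phi> applied to an operator on C^n (x) H (given as a function on
({..<n}) \<times> 'h).\<close>
definition ampl :: "('h::finite op \<Rightarrow> 'k::finite op) \<Rightarrow> (nat \<times> 'h \<Rightarrow> nat \<times> 'h \<Rightarrow> complex)
                    \<Rightarrow> (nat \<times> 'k \<Rightarrow> nat \<times> 'k \<Rightarrow> complex)" where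
  "ampl \<Phi> M = (\<lambda>(a, k) (b, l). \<Phi> (\<chi> i j. M (a, i) (b, j)) $ k $ l)"

definition completely_positive :: "('h::finite op \<Rightarrow> 'k::finite op) \<Rightarrow> bool" where
  "completely_positive \<Phi> \<longleftrightarrow>
     (\<forall>n::nat. \<forall>M. psd_on ({..<n} \<times> UNIV) M \<longrightarrow> psd_on ({..<n} \<times> UNIV) (ampl \<Phi> M))"

definition trace_preserving :: "('h::finite op \<Rightarrow> 'k::finite op) \<Rightarrow> bool" where
  "trace_preserving \<Phi> \<longleftrightarrow> (\<forall>\<rho>. trace (\<Phi> \<rho>) = trace \<rho>)"

definition trace_nonincreasing :: "('h::finite op \<Rightarrow> 'k::finite op) \<Rightarrow> bool" where
  "trace_nonincreasing \<Phi> \<longleftrightarrow> (\<forall>\<rho>. psd \<rho> \<longrightarrow> Re (trace (\<Phi> \<rho>)) \<le> Re (trace \<rho>))"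

definition induced_channel :: "('x::finite \<Rightarrow> 'h::finite op \<Rightarrow> 'k::finite op) \<Rightarrow> 'h op \<Rightarrow> 'k op" where
  "induced_channel I \<rho> = (\<Sum>x\<in>UNIV. I x \<rho>)"

definition instrument :: "('x::finite \<Rightarrow> 'h::finite op \<Rightarrow> 'k::finite op) \<Rightarrow> bool" where
  "instrument I \<longleftrightarrow>
     (\<forall>x. linear_op_map (I x) \<and> completely_positive (I x) \<and> trace_nonincreasing (I x)) \<and>
     trace_preserving (induced_channel I)"

definition povm :: "('x::finite \<Rightarrow> 'h::finite op) \<Rightarrow> bool" where
  "povm A \<longleftrightarrow> (\<forall>x. psd (A x)) \<and> (\<Sum>x\<in>UNIV. A x) = mat 1"

definition induced_povm :: "('x::finite \<Rightarrow> 'h::finite op \<Rightarrow> 'k::finite op) \<Rightarrow> 'x \<Rightarrow> 'h op" where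
  "induced_povm I x = (THE A. \<forall>\<rho>. trace (A ** \<rho>) = trace (I x \<rho>))"

text \<open>POVM identified with the instrument in Ins(\<Omega>,H,C), C = complex^1.\<close>
definition povm_ins :: "('x::finite \<Rightarrow> 'h::finite op) \<Rightarrow> 'x \<Rightarrow> 'h op \<Rightarrow> 1 op" where
  "povm_ins A x \<rho> = (\<chi> i j. trace (A x ** \<rho>))"

text \<open>Channel identified with a one-outcome instrument.\<close>
definition channel_ins :: "('h::finite op \<Rightarrow> 'k::finite op) \<Rightarrow> unit \<Rightarrow> 'h op \<Rightarrow> 'k op" where
  "channel_ins \<Phi> u = \<Phi>"

definition ptrace1 :: "('k::finite \<times> 'v::finite) op \<Rightarrow> 'v op" where
  "ptrace1 M = (\<chi> v v'. \<Sum>k\<in>UNIV. M $ (k, v) $ (k, v'))"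

definition ptrace2 :: "('k::finite \<times> 'v::finite) op \<Rightarrow> 'k op" where
  "ptrace2 M = (\<chi> k k'. \<Sum>v\<in>UNIV. M $ (k, v) $ (k', v))"

definition compatible ::
  "('x::finite \<Rightarrow> 'h::finite op \<Rightarrow> 'k::finite op) \<Rightarrow> ('y::finite \<Rightarrow> 'h op \<Rightarrow> 'v::finite op) \<Rightarrow> bool" where
  "compatible I J \<longleftrightarrow>
     (\<exists>G :: 'x \<times> 'y \<Rightarrow> 'h op \<Rightarrow> ('k \<times> 'v) op. instrument G \<and>
        (\<forall>\<rho>. is_state \<rho> \<longrightarrow>
           (\<forall>y. (\<Sum>x\<in>UNIV. ptrace1 (G (x, y) \<rho>)) = J y \<rho>) \<and>
           (\<forall>x. (\<Sum>y\<in>UNIV. ptrace2 (G (x, y) \<rho>)) = I x \<rho>)))"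

definition does_not_disturb ::
  "('x::finite \<Rightarrow> 'h::finite op \<Rightarrow> 'h op) \<Rightarrow> ('y::finite \<Rightarrow> 'h op \<Rightarrow> 'v::finite op) \<Rightarrow> bool" where
  "does_not_disturb I J \<longleftrightarrow> (\<forall>y. J y \<circ> induced_channel I = J y)"

definition povm_does_not_disturb ::
  "('x::finite \<Rightarrow> 'h::finite op) \<Rightarrow> ('y::finite \<Rightarrow> 'h op \<Rightarrow> 'v::finite op) \<Rightarrow> bool" where
  "povm_does_not_disturb A J \<longleftrightarrow>
     (\<exists>I' :: 'x \<Rightarrow> 'h op \<Rightarrow> 'h op. instrument I' \<and> induced_povm I' = A \<and> does_not_disturb I' J)"

end

theory Submission
  imports Defs
begin

(* Performing I and then J is an instrument with outcomes (x, y); when I does not disturb J its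
   y-marginal is J \<circ> \<Phi>^I = J and its x-marginal has traces tr[I_x \<rho>] = tr[A^I(x) \<rho>], so it is a
   joint instrument for A^I and J.  Any instrument inducing A^I may play the role of I.  From a
   joint instrument for A^I and J, summing out the outcome of J gives one for A^I and \<Phi>^J, and
   tracing out the output space V gives one for A^I and A^J.  All maps built this way are
   completely positive because they are composites and sums of sandwiches \<rho> \<mapsto> K \<rho> K\<^sup>*. *)

lemma op_smult_sum: "op_smult c (sum f S) = (\<Sum>x\<in>S. op_smult c (f x))"
  by (simp add: vec_eq_iff op_smult_def sum_distrib_left)

lemma linear_op_map_add: "linear_op_map \<Phi> \<Longrightarrow> \<Phi> (A + B) = \<Phi> A + \<Phi> B"
  unfolding linear_op_map_def by blast

lemma linear_op_map_smult: "linear_op_map \<Phi> \<Longrightarrow> \<Phi> (op_smult c A) = op_smult c (\<Phi> A)"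
  unfolding linear_op_map_def by blast

lemma linear_op_map_zero: "linear_op_map \<Phi> \<Longrightarrow> \<Phi> 0 = 0"
  using linear_op_map_add[of \<Phi> 0 0] by simp

lemma linear_op_map_sum: "linear_op_map \<Phi> \<Longrightarrow> \<Phi> (sum f S) = (\<Sum>x\<in>S. \<Phi> (f x))"
  by (induct S rule: infinite_finite_induct) (simp_all add: linear_op_map_zero linear_op_map_add)

lemma linear_op_map_compose: "linear_op_map \<Phi> \<Longrightarrow> linear_op_map \<Psi> \<Longrightarrow> linear_op_map (\<Phi> \<circ> \<Psi>)"
  unfolding linear_op_map_def by simp

lemma linear_op_map_compose_sum:
  "(\<And>y. y \<in> S \<Longrightarrow> linear_op_map (F y)) \<Longrightarrow> linear_op_map (\<lambda>\<rho>. \<Sum>y\<in>S. F y \<rho>)"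
  unfolding linear_op_map_def by (simp add: sum.distrib op_smult_sum)

lemma trace_sum: "trace (sum f S) = (\<Sum>x\<in>S. trace (f x))"
  unfolding trace_def by (simp add: sum.swap[of _ S])

lemma trace_smult: "trace (op_smult c A) = c * trace A"
  unfolding trace_def op_smult_def by (simp add: sum_distrib_left)

lemma ptrace1_sum: "ptrace1 (sum f S) = (\<Sum>x\<in>S. ptrace1 (f x))"
  unfolding ptrace1_def by (simp add: vec_eq_iff sum.swap[of _ S])

lemma ptrace2_sum: "ptrace2 (sum f S) = (\<Sum>x\<in>S. ptrace2 (f x))"
  unfolding ptrace2_def by (simp add: vec_eq_iff sum.swap[of _ S])

lemma sum_UNIV_prod:
  "sum g (UNIV :: ('a::finite \<times> 'b::finite) set) = (\<Sum>a\<in>UNIV. \<Sum>b\<in>UNIV. g (a, b))"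
  by (simp add: sum.cartesian_product' UNIV_Times_UNIV[symmetric] del: UNIV_Times_UNIV)

lemma trace_ptrace1: "trace (ptrace1 (M :: ('k::finite \<times> 'v::finite) op)) = trace M"
  unfolding trace_def ptrace1_def sum_UNIV_prod by (simp add: sum.swap[of _ "UNIV :: 'v set"])

lemma trace_ptrace2: "trace (ptrace2 M) = trace M"
  unfolding trace_def ptrace2_def sum_UNIV_prod by simp

section \<open>The induced POVM\<close>

definition mat_unit :: "'h::finite \<Rightarrow> 'h \<Rightarrow> 'h op" where
  "mat_unit i j = (\<chi> a b. if a = i \<and> b = j then 1 else 0)"

lemma op_eq_sum_mat_unit: "\<rho> = (\<Sum>i\<in>UNIV. \<Sum>j\<in>UNIV. op_smult (\<rho> $ i $ j) (mat_unit i j))"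
proof -
  have "op_smult (\<rho> $ i $ j) (mat_unit i j) $ a $ b
      = (if j = b then if i = a then \<rho> $ i $ j else 0 else 0)" for i j a b
    by (auto simp: op_smult_def mat_unit_def)
  then show ?thesis
    by (simp add: vec_eq_iff)
qed

lemma trace_mult_mat_unit: "trace (B ** mat_unit j i) = B $ i $ j"
proof -
  have "B $ a $ k * mat_unit j i $ k $ a = (if k = j then if a = i then B $ i $ j else 0 else 0)" for a k
    by (auto simp: mat_unit_def)
  then show ?thesis
    unfolding trace_def matrix_matrix_mult_def by simp
qed

lemma induced_povm_trace:
  assumes "linear_op_map (I x)"
  shows "trace (induced_povm I x ** \<rho>) = trace (I x \<rho>)"
proof -
  define A where "A = (\<chi> i j. trace (I x (mat_unit j i)))"
  have A: "trace (A ** \<sigma>) = trace (I x \<sigma>)" for \<sigma>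
  proof -
    have "trace (I x \<sigma>) = (\<Sum>i\<in>UNIV. \<Sum>j\<in>UNIV. \<sigma> $ i $ j * trace (I x (mat_unit i j)))"
      by (subst op_eq_sum_mat_unit[of \<sigma>])
        (simp add: assms linear_op_map_sum linear_op_map_smult trace_sum trace_smult)
    also have "\<dots> = trace (A ** \<sigma>)"
      unfolding trace_def matrix_matrix_mult_def A_def
      by (subst sum.swap) (simp add: mult.commute)
    finally show ?thesis by simp
  qed
  moreover have "B = A" if "\<forall>\<sigma>. trace (B ** \<sigma>) = trace (I x \<sigma>)" for B
    using that A trace_mult_mat_unit by (metis vec_eq_iff)
  ultimately have "induced_povm I x = A"
    unfolding induced_povm_def by (intro the_equality) auto
  with A show ?thesis by simp
qed

lemma povm_ins_induced_povm:
  assumes "linear_op_map (I x)"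
  shows "povm_ins (induced_povm I) x \<rho> = (\<chi> i j. trace (I x \<rho>))"
  unfolding povm_ins_def induced_povm_trace[of I x, OF assms] ..

section \<open>Positivity and complete positivity\<close>

definition quad_form :: "'a set \<Rightarrow> ('a \<Rightarrow> 'a \<Rightarrow> complex) \<Rightarrow> ('a \<Rightarrow> complex) \<Rightarrow> complex" where
  "quad_form S M v = (\<Sum>\<alpha>\<in>S. \<Sum>\<beta>\<in>S. cnj (v \<alpha>) * M \<alpha> \<beta> * v \<beta>)"

lemma psd_on_iff_quad_form:
  "psd_on S M \<longleftrightarrow> (\<forall>v. Im (quad_form S M v) = 0 \<and> 0 \<le> Re (quad_form S M v))"
  unfolding psd_on_def quad_form_def ..

lemma quad_form_cong:
  "(\<And>\<alpha> \<beta>. \<alpha> \<in> S \<Longrightarrow> \<beta> \<in> S \<Longrightarrow> M \<alpha> \<beta> = N \<alpha> \<beta>) \<Longrightarrow> quad_form S M v = quad_form S N v"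
  unfolding quad_form_def by (intro sum.cong refl) simp

lemma psd_on_cong:
  "(\<And>\<alpha> \<beta>. \<alpha> \<in> S \<Longrightarrow> \<beta> \<in> S \<Longrightarrow> M \<alpha> \<beta> = N \<alpha> \<beta>) \<Longrightarrow> psd_on S M \<longleftrightarrow> psd_on S N"
  unfolding psd_on_iff_quad_form by (metis quad_form_cong)

lemma quad_form_sum: "quad_form S (\<lambda>\<alpha> \<beta>. \<Sum>y\<in>Y. M y \<alpha> \<beta>) v = (\<Sum>y\<in>Y. quad_form S (M y) v)"
  unfolding quad_form_def by (simp add: sum_distrib_left sum_distrib_right sum.swap[of _ Y])

lemma quad_form_sandwich:
  "quad_form S (\<lambda>\<alpha> \<beta>. \<Sum>\<pi>\<in>P. \<Sum>\<kappa>\<in>P. C \<alpha> \<pi> * M \<pi> \<kappa> * cnj (C \<beta> \<kappa>)) v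
     = quad_form P M (\<lambda>\<pi>. \<Sum>\<alpha>\<in>S. cnj (C \<alpha> \<pi>) * v \<alpha>)"
proof -
  define T where "T \<alpha> \<beta> \<pi> \<kappa> = cnj (v \<alpha>) * C \<alpha> \<pi> * M \<pi> \<kappa> * cnj (C \<beta> \<kappa>) * v \<beta>" for \<alpha> \<beta> \<pi> \<kappa>
  have "quad_form S (\<lambda>\<alpha> \<beta>. \<Sum>\<pi>\<in>P. \<Sum>\<kappa>\<in>P. C \<alpha> \<pi> * M \<pi> \<kappa> * cnj (C \<beta> \<kappa>)) v
      = (\<Sum>\<alpha>\<in>S. \<Sum>\<beta>\<in>S. \<Sum>\<pi>\<in>P. \<Sum>\<kappa>\<in>P. T \<alpha> \<beta> \<pi> \<kappa>)"
    unfolding quad_form_def T_def by (simp add: sum_distrib_left sum_distrib_right mult_ac)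
  also have "\<dots> = (\<Sum>\<alpha>\<in>S. \<Sum>\<pi>\<in>P. \<Sum>\<beta>\<in>S. \<Sum>\<kappa>\<in>P. T \<alpha> \<beta> \<pi> \<kappa>)"
    by (rule sum.cong[OF refl sum.swap])
  also have "\<dots> = (\<Sum>\<pi>\<in>P. \<Sum>\<alpha>\<in>S. \<Sum>\<kappa>\<in>P. \<Sum>\<beta>\<in>S. T \<alpha> \<beta> \<pi> \<kappa>)"
    by (subst sum.swap) (rule sum.cong[OF refl sum.cong[OF refl sum.swap]])
  also have "\<dots> = (\<Sum>\<pi>\<in>P. \<Sum>\<kappa>\<in>P. \<Sum>\<alpha>\<in>S. \<Sum>\<beta>\<in>S. T \<alpha> \<beta> \<pi> \<kappa>)"
    by (rule sum.cong[OF refl sum.swap])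
  also have "\<dots> = quad_form P M (\<lambda>\<pi>. \<Sum>\<alpha>\<in>S. cnj (C \<alpha> \<pi>) * v \<alpha>)"
    unfolding quad_form_def T_def by (simp add: sum_distrib_left sum_distrib_right mult_ac)
  finally show ?thesis .
qed

lemma psd_on_sum: "(\<And>y. y \<in> Y \<Longrightarrow> psd_on S (M y)) \<Longrightarrow> psd_on S (\<lambda>\<alpha> \<beta>. \<Sum>y\<in>Y. M y \<alpha> \<beta>)"
  unfolding psd_on_iff_quad_form quad_form_sum by (simp add: sum_nonneg)

lemma psd_on_sandwich:
  "psd_on P M \<Longrightarrow> psd_on S (\<lambda>\<alpha> \<beta>. \<Sum>\<pi>\<in>P. \<Sum>\<kappa>\<in>P. C \<alpha> \<pi> * M \<pi> \<kappa> * cnj (C \<beta> \<kappa>))"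
  unfolding psd_on_iff_quad_form quad_form_sandwich by blast

lemma quad_form_reindex:
  "inj_on h S \<Longrightarrow> quad_form (h ` S) M v = quad_form S (\<lambda>\<alpha> \<beta>. M (h \<alpha>) (h \<beta>)) (v \<circ> h)"
  unfolding quad_form_def by (simp add: sum.reindex)

lemma psd_on_reindex:
  assumes "inj_on h S"
  shows "psd_on (h ` S) M \<longleftrightarrow> psd_on S (\<lambda>\<alpha> \<beta>. M (h \<alpha>) (h \<beta>))"
proof
  assume psd: "psd_on (h ` S) M"
  show "psd_on S (\<lambda>\<alpha> \<beta>. M (h \<alpha>) (h \<beta>))"
    unfolding psd_on_iff_quad_form
  proof
    fix w
    have "quad_form S (\<lambda>\<alpha> \<beta>. M (h \<alpha>) (h \<beta>)) w
        = quad_form S (\<lambda>\<alpha> \<beta>. M (h \<alpha>) (h \<beta>)) (w \<circ> the_inv_into S h \<circ> h)"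
      unfolding quad_form_def using assms by (intro sum.cong refl) (simp add: the_inv_into_f_f)
    also have "\<dots> = quad_form (h ` S) M (w \<circ> the_inv_into S h)"
      using assms by (simp add: quad_form_reindex)
    finally show "Im (quad_form S (\<lambda>\<alpha> \<beta>. M (h \<alpha>) (h \<beta>)) w) = 0 \<and>
        0 \<le> Re (quad_form S (\<lambda>\<alpha> \<beta>. M (h \<alpha>) (h \<beta>)) w)"
      using psd unfolding psd_on_iff_quad_form by simp
  qed
next
  assume "psd_on S (\<lambda>\<alpha> \<beta>. M (h \<alpha>) (h \<beta>))"
  then show "psd_on (h ` S) M"
    using assms unfolding psd_on_iff_quad_form by (simp add: quad_form_reindex)
qed

lemma all_vec_nth_iff: "(\<forall>v. P (vec_nth v)) \<longleftrightarrow> (\<forall>f. P f)"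
proof
  assume "\<forall>v. P (vec_nth v)"
  then have "P (vec_nth (vec_lambda f))" for f by blast
  then show "\<forall>f. P f" by (simp add: vec_lambda_inverse)
qed blast

lemma psd_iff_psd_on: "psd M \<longleftrightarrow> psd_on UNIV (\<lambda>i j. M $ i $ j)"
  unfolding psd_def psd_on_def by (rule all_vec_nth_iff)

definition sandwich :: "complex^'p::finite^'k::finite \<Rightarrow> 'p op \<Rightarrow> 'k op" where
  "sandwich K M = (\<chi> i j. \<Sum>p\<in>UNIV. \<Sum>q\<in>UNIV. K $ i $ p * M $ p $ q * cnj (K $ j $ q))"

lemma linear_op_map_sandwich: "linear_op_map (sandwich K)"
  unfolding linear_op_map_def sandwich_def
  by (simp add: vec_eq_iff op_smult_def sum.distrib sum_distrib_left algebra_simps)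

lemma completely_positive_sandwich:
  fixes K :: "complex^'p::finite^'k::finite"
  shows "completely_positive (sandwich K)"
  unfolding completely_positive_def
proof (intro allI impI)
  fix n :: nat and M :: "nat \<times> 'p \<Rightarrow> nat \<times> 'p \<Rightarrow> complex"
  assume M: "psd_on ({..<n} \<times> UNIV) M"
  \<comment> \<open>the amplification of a sandwich by K is the sandwich by the block-diagonal matrix C\<close>
  define C :: "nat \<times> 'k \<Rightarrow> nat \<times> 'p \<Rightarrow> complex"
    where "C = (\<lambda>(a, k) (c, p). if c = a then K $ k $ p else 0)"
  have sum_if_const: "(\<Sum>x\<in>A. if P then f x else 0) = (if P then sum f A else (0::complex))"
    for A P and f :: "_ \<Rightarrow> complex"
    by simp
  have "ampl (sandwich K) M (a, k) (b, l)
      = (\<Sum>\<pi>\<in>{..<n} \<times> UNIV. \<Sum>\<kappa>\<in>{..<n} \<times> UNIV. C (a, k) \<pi> * M \<pi> \<kappa> * cnj (C (b, l) \<kappa>))"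
    if "a < n" "b < n" for a k b l
  proof -
    have "(\<Sum>\<pi>\<in>{..<n} \<times> UNIV. \<Sum>\<kappa>\<in>{..<n} \<times> UNIV. C (a, k) \<pi> * M \<pi> \<kappa> * cnj (C (b, l) \<kappa>))
       = (\<Sum>c<n. \<Sum>p\<in>UNIV. \<Sum>d<n. \<Sum>q\<in>UNIV.
            if c = a then if d = b then K $ k $ p * M (c, p) (d, q) * cnj (K $ l $ q) else 0 else 0)"
      unfolding C_def sum.cartesian_product' by (intro sum.cong refl) auto
    also have "\<dots> = (\<Sum>p\<in>UNIV. \<Sum>q\<in>UNIV. K $ k $ p * M (a, p) (b, q) * cnj (K $ l $ q))"
      using that by (simp add: sum_if_const)
    finally show ?thesis
      unfolding ampl_def sandwich_def by simp
  qed
  then have "psd_on ({..<n} \<times> UNIV) (ampl (sandwich K) M) \<longleftrightarrow>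
      psd_on ({..<n} \<times> UNIV)
        (\<lambda>\<alpha> \<beta>. \<Sum>\<pi>\<in>{..<n} \<times> UNIV. \<Sum>\<kappa>\<in>{..<n} \<times> UNIV. C \<alpha> \<pi> * M \<pi> \<kappa> * cnj (C \<beta> \<kappa>))"
    by (intro psd_on_cong) auto
  with psd_on_sandwich[OF M] show "psd_on ({..<n} \<times> UNIV) (ampl (sandwich K) M)"
    by blast
qed

lemma ampl_compose: "ampl (\<Phi> \<circ> \<Psi>) M = ampl \<Phi> (ampl \<Psi> M)"
  unfolding ampl_def by (intro ext) auto

lemma completely_positive_compose:
  "completely_positive \<Phi> \<Longrightarrow> completely_positive \<Psi> \<Longrightarrow> completely_positive (\<Phi> \<circ> \<Psi>)"
  unfolding completely_positive_def ampl_compose by blast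

lemma completely_positive_compose_sum:
  assumes "\<And>y. y \<in> Y \<Longrightarrow> completely_positive (F y)"
  shows "completely_positive (\<lambda>\<rho>. \<Sum>y\<in>Y. F y \<rho>)"
proof -
  have "ampl (\<lambda>\<rho>. \<Sum>y\<in>Y. F y \<rho>) M = (\<lambda>\<alpha> \<beta>. \<Sum>y\<in>Y. ampl (F y) M \<alpha> \<beta>)" for M
    unfolding ampl_def by (intro ext) auto
  with assms show ?thesis
    unfolding completely_positive_def by (simp add: psd_on_sum)
qed

lemma lessThan_1_Times: "{..<1::nat} \<times> A = Pair 0 ` A"
  by (auto simp: less_one)

lemma psd_completely_positive:
  fixes \<Phi> :: "'h::finite op \<Rightarrow> 'k::finite op"
  assumes "completely_positive \<Phi>" and "psd \<rho>"
  shows "psd (\<Phi> \<rho>)"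
proof -
  \<comment> \<open>complete positivity for n = 1, with H identified with {0} \<times> H\<close>
  define M where "M = (\<lambda>(_::nat, i) (_::nat, j). \<rho> $ i $ j)"
  have "psd_on (Pair 0 ` UNIV) M"
    using \<open>psd \<rho>\<close> by (simp add: psd_on_reindex inj_on_def psd_iff_psd_on M_def)
  with assms(1) have "psd_on (Pair 0 ` UNIV) (ampl \<Phi> M)"
    unfolding completely_positive_def lessThan_1_Times[symmetric] by blast
  moreover have "ampl \<Phi> M (0, k) (0, l) = \<Phi> \<rho> $ k $ l" for k l
    by (simp add: ampl_def M_def)
  ultimately show ?thesis
    by (simp add: psd_on_reindex inj_on_def psd_iff_psd_on)
qed

lemma psd_trace_nonneg:
  assumes "psd M"
  shows "Im (trace M) = 0" and "0 \<le> Re (trace M)"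
proof -
  have diag: "Im (M $ i $ i) = 0 \<and> 0 \<le> Re (M $ i $ i)" for i
  proof -
    have "cnj (axis i 1 $ p) * M $ p $ q * axis i 1 $ q
        = (if q = i then if p = i then M $ i $ i else 0 else 0)" for p q
      by (simp add: axis_def)
    then have "(\<Sum>p\<in>UNIV. \<Sum>q\<in>UNIV. cnj (axis i 1 $ p) * M $ p $ q * axis i 1 $ q) = M $ i $ i"
      by simp
    with assms[unfolded psd_def, THEN spec[where x = "axis i 1"]] show ?thesis
      by simp
  qed
  then show "Im (trace M) = 0" and "0 \<le> Re (trace M)"
    unfolding trace_def by (simp_all add: sum_nonneg)
qed

section \<open>Adjoining and discarding a trivial tensor factor\<close>

definition one_tensor :: "'v::finite op \<Rightarrow> (1 \<times> 'v) op" where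
  "one_tensor M = (\<chi> i j. M $ snd i $ snd j)"

lemma one_tensor_eq_sandwich:
  "(one_tensor :: 'v::finite op \<Rightarrow> _) = sandwich (\<chi> i v. if snd i = v then 1 else 0)"
proof
  fix M :: "'v op"
  have "(if snd i = p then 1 else 0) * M $ p $ q * cnj (if snd j = q then 1 else 0)
      = (if q = snd j then if p = snd i then M $ p $ q else 0 else 0)" for i j :: "1 \<times> 'v" and p q
    by simp
  then show "one_tensor M = sandwich (\<chi> i v. if snd i = v then 1 else 0) M"
    unfolding one_tensor_def sandwich_def by (simp add: vec_eq_iff)
qed

lemma trace_one_tensor: "trace (one_tensor M) = trace M"
  unfolding trace_def one_tensor_def sum_UNIV_prod by simp

lemma ptrace1_one_tensor: "ptrace1 (one_tensor M) = M"
  unfolding ptrace1_def one_tensor_def by (simp add: vec_eq_iff)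

lemma ptrace2_one_tensor: "ptrace2 (one_tensor M) = (\<chi> i j. trace M)"
  unfolding ptrace2_def one_tensor_def trace_def by simp

definition trace_out_right :: "('k::finite \<times> 'v::finite) op \<Rightarrow> ('k \<times> 1) op" where
  "trace_out_right M = (\<chi> i j. ptrace2 M $ fst i $ fst j)"

lemma trace_out_right_eq_sum_sandwich:
  fixes M :: "('k::finite \<times> 'v::finite) op"
  shows "trace_out_right M = (\<Sum>v\<in>UNIV. sandwich (\<chi> i j. if fst j = fst i \<and> snd j = v then 1 else 0) M)"
proof -
  have "(if fst p = fst i \<and> snd p = v then 1 else 0) * M $ p $ q *
        cnj (if fst q = fst j \<and> snd q = v then 1 else 0)
      = (if q = (fst j, v) then if p = (fst i, v) then M $ p $ q else 0 else 0)"
    for i j :: "'k \<times> 1" and p q v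
    by (cases p; cases q) auto
  then show ?thesis
    unfolding trace_out_right_def sandwich_def ptrace2_def by (simp add: vec_eq_iff)
qed

lemma trace_trace_out_right: "trace (trace_out_right M) = trace M"
proof -
  have "trace (trace_out_right M) = trace (ptrace2 M)"
    unfolding trace_def trace_out_right_def by (simp add: sum_UNIV_prod)
  then show ?thesis by (simp add: trace_ptrace2)
qed

lemma ptrace1_trace_out_right: "ptrace1 (trace_out_right M) = (\<chi> i j. trace M)"
proof -
  have "ptrace1 (trace_out_right M) = (\<chi> i j. trace (ptrace2 M))"
    unfolding ptrace1_def trace_out_right_def trace_def by simp
  then show ?thesis by (simp add: trace_ptrace2)
qed

lemma ptrace2_trace_out_right: "ptrace2 (trace_out_right M) = ptrace2 M"
  unfolding trace_out_right_def by (simp add: ptrace2_def vec_eq_iff)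

lemma linear_op_map_one_tensor: "linear_op_map one_tensor"
  by (simp add: one_tensor_eq_sandwich linear_op_map_sandwich)

lemma completely_positive_one_tensor: "completely_positive one_tensor"
  by (simp add: one_tensor_eq_sandwich completely_positive_sandwich)

lemma trace_preserving_one_tensor: "trace_preserving one_tensor"
  by (simp add: trace_preserving_def trace_one_tensor)

lemma linear_op_map_trace_out_right: "linear_op_map trace_out_right"
  unfolding trace_out_right_eq_sum_sandwich[abs_def]
  by (intro linear_op_map_compose_sum linear_op_map_sandwich)

lemma completely_positive_trace_out_right: "completely_positive trace_out_right"
  unfolding trace_out_right_eq_sum_sandwich[abs_def]
  by (intro completely_positive_compose_sum completely_positive_sandwich)

lemma trace_preserving_trace_out_right: "trace_preserving trace_out_right"
  by (simp add: trace_preserving_def trace_trace_out_right)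

lemma instrumentI:
  assumes "\<And>x. linear_op_map (I x)" and "\<And>x. completely_positive (I x)"
    and "\<And>x \<rho>. psd \<rho> \<Longrightarrow> Re (trace (I x \<rho>)) \<le> Re (trace \<rho>)"
    and "\<And>\<rho>. (\<Sum>x\<in>UNIV. trace (I x \<rho>)) = trace \<rho>"
  shows "instrument I"
  using assms
  unfolding instrument_def trace_nonincreasing_def trace_preserving_def induced_channel_def trace_sum
  by blast

lemma instrument_linear: "instrument I \<Longrightarrow> linear_op_map (I x)"
  unfolding instrument_def by blast

lemma instrument_completely_positive: "instrument I \<Longrightarrow> completely_positive (I x)"
  unfolding instrument_def by blast

lemma instrument_trace_le: "instrument I \<Longrightarrow> psd \<rho> \<Longrightarrow> Re (trace (I x \<rho>)) \<le> Re (trace \<rho>)"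
  unfolding instrument_def trace_nonincreasing_def by blast

lemma instrument_sum_trace: "instrument I \<Longrightarrow> (\<Sum>x\<in>UNIV. trace (I x \<rho>)) = trace \<rho>"
  unfolding instrument_def trace_preserving_def induced_channel_def trace_sum by blast

lemma instrument_psd: "instrument I \<Longrightarrow> psd \<rho> \<Longrightarrow> psd (I x \<rho>)"
  by (simp add: instrument_completely_positive psd_completely_positive)

lemma instrument_sequential:
  fixes I :: "'x::finite \<Rightarrow> 'h::finite op \<Rightarrow> 'k::finite op"
    and J :: "'y::finite \<Rightarrow> 'k op \<Rightarrow> 'v::finite op"
  assumes I: "instrument I" and J: "instrument J"
  shows "instrument (\<lambda>(x, y). J y \<circ> I x)"
proof (rule instrumentI)
  fix xy :: "'x \<times> 'y" and \<rho> :: "'h op"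
  obtain x y where xy: "xy = (x, y)" by fastforce
  show "linear_op_map ((\<lambda>(x, y). J y \<circ> I x) xy)"
    using I J by (simp add: xy linear_op_map_compose instrument_linear)
  show "completely_positive ((\<lambda>(x, y). J y \<circ> I x) xy)"
    using I J by (simp add: xy completely_positive_compose instrument_completely_positive)
  assume "psd \<rho>"
  then have "Re (trace (J y (I x \<rho>))) \<le> Re (trace (I x \<rho>))"
    using I J by (simp add: instrument_trace_le instrument_psd)
  also have "\<dots> \<le> Re (trace \<rho>)"
    using I \<open>psd \<rho>\<close> by (rule instrument_trace_le)
  finally show "Re (trace ((\<lambda>(x, y). J y \<circ> I x) xy \<rho>)) \<le> Re (trace \<rho>)"
    by (simp add: xy)
next
  fix \<rho> :: "'h op"
  show "(\<Sum>xy\<in>UNIV. trace ((\<lambda>(x, y). J y \<circ> I x) xy \<rho>)) = trace \<rho>"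
    using I J by (simp add: sum_UNIV_prod instrument_sum_trace)
qed

lemma instrument_compose_channel:
  assumes "instrument G"
    and "linear_op_map \<Psi>" "completely_positive \<Psi>" "trace_preserving \<Psi>"
  shows "instrument (\<lambda>x. \<Psi> \<circ> G x)"
proof -
  have "trace (\<Psi> M) = trace M" for M
    using \<open>trace_preserving \<Psi>\<close> unfolding trace_preserving_def by blast
  with assms show ?thesis
    by (intro instrumentI)
      (simp_all add: linear_op_map_compose completely_positive_compose instrument_linear
        instrument_completely_positive instrument_trace_le instrument_sum_trace)
qed

lemma instrument_relabel:
  fixes G :: "'w::finite \<Rightarrow> 'h::finite op \<Rightarrow> 'k::finite op" and f :: "'w \<Rightarrow> 'z::finite"
  assumes G: "instrument G"
  shows "instrument (\<lambda>z \<rho>. \<Sum>w\<in>{w. f w = z}. G w \<rho>)"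
proof (rule instrumentI)
  fix z and \<rho> :: "'h op"
  show "linear_op_map (\<lambda>\<rho>. \<Sum>w\<in>{w. f w = z}. G w \<rho>)"
    using G by (simp add: linear_op_map_compose_sum instrument_linear)
  show "completely_positive (\<lambda>\<rho>. \<Sum>w\<in>{w. f w = z}. G w \<rho>)"
    using G by (simp add: completely_positive_compose_sum instrument_completely_positive)
  assume "psd \<rho>"
  have "Re (trace (\<Sum>w\<in>{w. f w = z}. G w \<rho>)) = (\<Sum>w\<in>{w. f w = z}. Re (trace (G w \<rho>)))"
    by (simp add: trace_sum)
  also have "\<dots> \<le> (\<Sum>w\<in>UNIV. Re (trace (G w \<rho>)))"
    using G \<open>psd \<rho>\<close> by (intro sum_mono2) (auto simp: instrument_psd psd_trace_nonneg)
  also have "\<dots> = Re (trace \<rho>)"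
    by (simp flip: instrument_sum_trace[OF G])
  finally show "Re (trace (\<Sum>w\<in>{w. f w = z}. G w \<rho>)) \<le> Re (trace \<rho>)" .
next
  fix \<rho> :: "'h op"
  have "(\<Sum>z\<in>UNIV. trace (\<Sum>w\<in>{w. f w = z}. G w \<rho>)) = (\<Sum>w\<in>UNIV. trace (G w \<rho>))"
    using sum.group[of UNIV UNIV f "\<lambda>w. trace (G w \<rho>)"] by (simp add: trace_sum)
  then show "(\<Sum>z\<in>UNIV. trace (\<Sum>w\<in>{w. f w = z}. G w \<rho>)) = trace \<rho>"
    using G by (simp add: instrument_sum_trace)
qed

lemma compatibleI:
  fixes G :: "'x::finite \<times> 'y::finite \<Rightarrow> 'h::finite op \<Rightarrow> ('k::finite \<times> 'v::finite) op"
  assumes "instrument G"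
    and "\<And>\<rho> y. is_state \<rho> \<Longrightarrow> (\<Sum>x\<in>UNIV. ptrace1 (G (x, y) \<rho>)) = J y \<rho>"
    and "\<And>\<rho> x. is_state \<rho> \<Longrightarrow> (\<Sum>y\<in>UNIV. ptrace2 (G (x, y) \<rho>)) = I x \<rho>"
  shows "compatible I J"
  using assms unfolding compatible_def by blast

lemma compatibleE:
  fixes I :: "'x::finite \<Rightarrow> 'h::finite op \<Rightarrow> 'k::finite op"
    and J :: "'y::finite \<Rightarrow> 'h op \<Rightarrow> 'v::finite op"
  assumes "compatible I J"
  obtains G :: "'x \<times> 'y \<Rightarrow> 'h op \<Rightarrow> ('k \<times> 'v) op"
  where "instrument G"
    and "\<And>\<rho> y. is_state \<rho> \<Longrightarrow> (\<Sum>x\<in>UNIV. ptrace1 (G (x, y) \<rho>)) = J y \<rho>"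
    and "\<And>\<rho> x. is_state \<rho> \<Longrightarrow> (\<Sum>y\<in>UNIV. ptrace2 (G (x, y) \<rho>)) = I x \<rho>"
  using assms unfolding compatible_def by (auto intro: that)

lemma sum_const_op: "(\<Sum>y\<in>Y. (\<chi> i j. f y) :: 'a::finite op) = (\<chi> i j. \<Sum>y\<in>Y. f y)"
  by (simp add: vec_eq_iff)

lemma compatible_if_does_not_disturb:
  fixes I :: "'x::finite \<Rightarrow> 'h::finite op \<Rightarrow> 'h op"
    and J :: "'y::finite \<Rightarrow> 'h op \<Rightarrow> 'v::finite op"
  assumes I: "instrument I" and J: "instrument J" and nd: "does_not_disturb I J"
  shows "compatible (povm_ins (induced_povm I)) J"
proof (rule compatibleI)
  let ?G = "\<lambda>xy. one_tensor \<circ> (\<lambda>(x, y). J y \<circ> I x) xy"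
  show "instrument ?G"
    by (intro instrument_compose_channel instrument_sequential I J linear_op_map_one_tensor
        completely_positive_one_tensor trace_preserving_one_tensor)
  fix \<rho>
  show "(\<Sum>x\<in>UNIV. ptrace1 (?G (x, y) \<rho>)) = J y \<rho>" for y
  proof -
    have "(\<Sum>x\<in>UNIV. ptrace1 (?G (x, y) \<rho>)) = J y (induced_channel I \<rho>)"
      using J by (simp add: ptrace1_one_tensor induced_channel_def linear_op_map_sum instrument_linear)
    also have "\<dots> = J y \<rho>"
      using nd unfolding does_not_disturb_def by (metis comp_apply)
    finally show ?thesis .
  qed
  show "(\<Sum>y\<in>UNIV. ptrace2 (?G (x, y) \<rho>)) = povm_ins (induced_povm I) x \<rho>" for x
    using I J
    by (simp add: ptrace2_one_tensor sum_const_op instrument_sum_trace povm_ins_induced_povm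
        instrument_linear)
qed

lemma compatible_if_povm_does_not_disturb:
  assumes "instrument J" and "povm_does_not_disturb A J"
  shows "compatible (povm_ins A) J"
proof -
  from \<open>povm_does_not_disturb A J\<close> obtain I where
    "instrument I" and "induced_povm I = A" and "does_not_disturb I J"
    unfolding povm_does_not_disturb_def by blast
  with \<open>instrument J\<close> show ?thesis
    using compatible_if_does_not_disturb by blast
qed

lemma compatible_induced_channel:
  fixes I :: "'x::finite \<Rightarrow> 'h::finite op \<Rightarrow> 'k::finite op"
    and J :: "'y::finite \<Rightarrow> 'h op \<Rightarrow> 'v::finite op"
  assumes "compatible I J"
  shows "compatible I (channel_ins (induced_channel J))"
proof -
  obtain G :: "'x \<times> 'y \<Rightarrow> 'h op \<Rightarrow> ('k \<times> 'v) op" where G: "instrument G"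
    and J_marginal: "\<And>\<rho> y. is_state \<rho> \<Longrightarrow> (\<Sum>x\<in>UNIV. ptrace1 (G (x, y) \<rho>)) = J y \<rho>"
    and I_marginal: "\<And>\<rho> x. is_state \<rho> \<Longrightarrow> (\<Sum>y\<in>UNIV. ptrace2 (G (x, y) \<rho>)) = I x \<rho>"
    using assms by (elim compatibleE) blast
  define f :: "'x \<times> 'y \<Rightarrow> 'x \<times> unit" where "f w = (fst w, ())" for w
  have fibre: "{w. f w = (x, u)} = {x} \<times> UNIV" for x u
    by (auto simp: f_def)
  show ?thesis
  proof (rule compatibleI)
    show "instrument (\<lambda>z \<rho>. \<Sum>w\<in>{w. f w = z}. G w \<rho>)"
      using G by (rule instrument_relabel)
    fix \<rho> :: "'h op" assume "is_state \<rho>"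
    show "(\<Sum>x\<in>UNIV. ptrace1 (\<Sum>w\<in>{w. f w = (x, u)}. G w \<rho>)) = channel_ins (induced_channel J) u \<rho>"
      for u
      using J_marginal[OF \<open>is_state \<rho>\<close>]
      by (simp add: fibre sum.cartesian_product' ptrace1_sum sum.swap[of _ UNIV UNIV]
          channel_ins_def induced_channel_def)
    show "(\<Sum>u\<in>UNIV. ptrace2 (\<Sum>w\<in>{w. f w = (x, u)}. G w \<rho>)) = I x \<rho>" for x
      using I_marginal[OF \<open>is_state \<rho>\<close>]
      by (simp add: fibre sum.cartesian_product' ptrace2_sum)
  qed
qed

lemma compatible_induced_povm:
  fixes I :: "'x::finite \<Rightarrow> 'h::finite op \<Rightarrow> 'k::finite op"
    and J :: "'y::finite \<Rightarrow> 'h op \<Rightarrow> 'v::finite op"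
  assumes "compatible I J" and J: "instrument J"
  shows "compatible I (povm_ins (induced_povm J))"
proof -
  obtain G :: "'x \<times> 'y \<Rightarrow> 'h op \<Rightarrow> ('k \<times> 'v) op" where G: "instrument G"
    and J_marginal: "\<And>\<rho> y. is_state \<rho> \<Longrightarrow> (\<Sum>x\<in>UNIV. ptrace1 (G (x, y) \<rho>)) = J y \<rho>"
    and I_marginal: "\<And>\<rho> x. is_state \<rho> \<Longrightarrow> (\<Sum>y\<in>UNIV. ptrace2 (G (x, y) \<rho>)) = I x \<rho>"
    using assms(1) by (elim compatibleE) blast
  show ?thesis
  proof (rule compatibleI)
    show "instrument (\<lambda>w. trace_out_right \<circ> G w)"
      by (intro instrument_compose_channel G linear_op_map_trace_out_right
          completely_positive_trace_out_right trace_preserving_trace_out_right)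
    fix \<rho> :: "'h op" assume "is_state \<rho>"
    show "(\<Sum>x\<in>UNIV. ptrace1 ((trace_out_right \<circ> G (x, y)) \<rho>)) = povm_ins (induced_povm J) y \<rho>"
      for y
    proof -
      have "(\<Sum>x\<in>UNIV. ptrace1 ((trace_out_right \<circ> G (x, y)) \<rho>))
          = (\<chi> i j. trace (\<Sum>x\<in>UNIV. ptrace1 (G (x, y) \<rho>)))"
        by (simp add: ptrace1_trace_out_right sum_const_op trace_sum trace_ptrace1)
      also have "\<dots> = povm_ins (induced_povm J) y \<rho>"
        using J by (simp add: J_marginal \<open>is_state \<rho>\<close> povm_ins_induced_povm instrument_linear)
      finally show ?thesis .
    qed
    show "(\<Sum>y\<in>UNIV. ptrace2 ((trace_out_right \<circ> G (x, y)) \<rho>)) = I x \<rho>" for x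
      using I_marginal[OF \<open>is_state \<rho>\<close>] by (simp add: ptrace2_trace_out_right)
  qed
qed

theorem corollary2:
  fixes I :: "'x::finite \<Rightarrow> 'h::finite op \<Rightarrow> 'h op"
    and J :: "'y::finite \<Rightarrow> 'h op \<Rightarrow> 'v::finite op"
  assumes "instrument I" and "instrument J"
  shows "(does_not_disturb I J \<longrightarrow> povm_does_not_disturb (induced_povm I) J) \<and>
         (povm_does_not_disturb (induced_povm I) J \<longrightarrow>
            compatible (povm_ins (induced_povm I)) J) \<and>
         (compatible (povm_ins (induced_povm I)) J \<longrightarrow>
            compatible (povm_ins (induced_povm I)) (channel_ins (induced_channel J)) \<and>
            compatible (povm_ins (induced_povm I)) (povm_ins (induced_povm J)))"
proof (intro conjI impI)
  assume "does_not_disturb I J"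
  with \<open>instrument I\<close> show "povm_does_not_disturb (induced_povm I) J"
    unfolding povm_does_not_disturb_def by blast
next
  assume "povm_does_not_disturb (induced_povm I) J"
  with \<open>instrument J\<close> show "compatible (povm_ins (induced_povm I)) J"
    by (rule compatible_if_povm_does_not_disturb)
next
  assume "compatible (povm_ins (induced_povm I)) J"
  then show "compatible (povm_ins (induced_povm I)) (channel_ins (induced_channel J))"
    by (rule compatible_induced_channel)
next
  assume "compatible (povm_ins (induced_povm I)) J"
  with \<open>instrument J\<close> show "compatible (povm_ins (induced_povm I)) (povm_ins (induced_povm J))"
    by (intro compatible_induced_povm)
qed

end
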